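(* Let $(X,Y)\sim P_{X,Y}$ be random variables in $\mathcal{X}\times\mathcal{Y}$, where $|\mathcal{X}|=2$ and $\mathcal{Y}$ is finite. For any positive integer $L$, the greedy-merge algorithm finds a quantizer $f:\mathcal{Y}\to\{1,\dots,L\}$ such that \[ I(X;Y)-I(X;f(Y))\leq\frac{64}{L^2}. \]
   Context: Logarithms are natural. The greedy-merge algorithm: repeatedly merge into a single new symbol the two output symbols $i\neq j$ whose merging (applying the map sending $i,j$ to a new common symbol and fixing all others) decreases the mutual information with $X$ the least, until at most $L$ symbols remain; the quantizer $f$ is the composition of all merges. *)

theory Defs
  imports Complex_Main
begin

definition is_joint_pmf :: "(bool \<Rightarrow> 'y::finite \<Rightarrow> real) \<Rightarrow> bool" where
  "is_joint_pmf p \<longleftrightarrow> (\<forall>x y. 0 \<le> p x y) \<and> (\<Sum>x\<in>UNIV. \<Sum>y\<in>UNIV. p x y) = 1"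

definition qjoint :: "(bool \<Rightarrow> 'y::finite \<Rightarrow> real) \<Rightarrow> ('y \<Rightarrow> 'z) \<Rightarrow> bool \<Rightarrow> 'z \<Rightarrow> real" where
  "qjoint p q x z = (\<Sum>y\<in>{y. q y = z}. p x y)"

definition marg_X :: "(bool \<Rightarrow> 'y::finite \<Rightarrow> real) \<Rightarrow> bool \<Rightarrow> real" where
  "marg_X p x = (\<Sum>y\<in>UNIV. p x y)"

text \<open>Mutual information I(X; q(Y)) in nats, with 0 ln 0 = 0
  (note ln 0 = 0 in Isabelle, and terms with zero joint mass vanish).\<close>
definition mutual_info :: "(bool \<Rightarrow> 'y::finite \<Rightarrow> real) \<Rightarrow> ('y \<Rightarrow> 'z) \<Rightarrow> real" where
  "mutual_info p q =
     (\<Sum>x\<in>UNIV. \<Sum>z\<in>range q.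
        qjoint p q x z * ln (qjoint p q x z /
          (marg_X p x * (\<Sum>x'\<in>UNIV. qjoint p q x' z))))"

text \<open>Output symbols are represented as the blocks (sets of y) they
  collect; merging symbols i and j replaces both by the new symbol i \<union> j
  (which is fresh, as the blocks are disjoint) and fixes all others.\<close>
definition merge :: "('y \<Rightarrow> 'y set) \<Rightarrow> 'y set \<Rightarrow> 'y set \<Rightarrow> ('y \<Rightarrow> 'y set)" where
  "merge g i j = (\<lambda>y. if g y = i \<or> g y = j then i \<union> j else g y)"

definition greedy_step :: "(bool \<Rightarrow> 'y::finite \<Rightarrow> real) \<Rightarrow> ('y \<Rightarrow> 'y set) \<Rightarrow> ('y \<Rightarrow> 'y set) \<Rightarrow> bool" where
  "greedy_step p g g' \<longleftrightarrow>
     (\<exists>i j. i \<in> range g \<and> j \<in> range g \<and> i \<noteq> j \<and> g' = merge g i j \<and>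
        (\<forall>i' j'. i' \<in> range g \<and> j' \<in> range g \<and> i' \<noteq> j' \<longrightarrow>
           mutual_info p g - mutual_info p (merge g i j)
             \<le> mutual_info p g - mutual_info p (merge g i' j')))"

inductive greedy_run :: "(bool \<Rightarrow> 'y::finite \<Rightarrow> real) \<Rightarrow> nat \<Rightarrow> ('y \<Rightarrow> 'y set) \<Rightarrow> ('y \<Rightarrow> 'y set) \<Rightarrow> bool"
  for p L where
  stop: "card (range g) \<le> L \<Longrightarrow> greedy_run p L g g"
| step: "card (range g) > L \<Longrightarrow> greedy_step p g g' \<Longrightarrow> greedy_run p L g' h \<Longrightarrow> greedy_run p L g h"

end

theory Submission
  imports Defs
begin

(* Write a\<^sub>z = P(X = True, q(Y) = z), b\<^sub>z = P(X = False, q(Y) = z) and let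
   E(a, b) = (a + b) h(a / (a + b)) be the weighted binary entropy. Then
   I(X; q(Y)) = H(X) - \<Sum>\<^sub>z E(a\<^sub>z, b\<^sub>z), so merging the symbols i and j costs
   E(a\<^sub>i + a\<^sub>j, b\<^sub>i + b\<^sub>j) - E(a\<^sub>i, b\<^sub>i) - E(a\<^sub>j, b\<^sub>j). Bounding this divergence by a chi-square and then by
   a Hellinger distance shows that merging two symbols of mass at most t costs at most
   2t(\<theta>\<^sub>i - \<theta>\<^sub>j)\<^sup>2, where \<theta>\<^sub>z \<in> [0, pi/2] is the angle of the unit vector
   (sqrt(a\<^sub>z/(a\<^sub>z+b\<^sub>z)), sqrt(b\<^sub>z/(a\<^sub>z+b\<^sub>z))). Of M symbols more than M/2 have mass at most 2/M, so
   by pigeonhole two of them have angles within pi/(2 (M div 2)); the cheapest merge therefore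
   costs at most 64/(M(M-1)\<^sup>2) \<le> 64/(M-1)\<^sup>2 - 64/M\<^sup>2, and these bounds telescope over the
   greedy steps from |Y| down to L symbols to 64/L\<^sup>2. *)

lemma mult_ln_div:
  fixes a c :: real
  assumes "a \<ge> 0" "c > 0"
  shows "a * ln (a / c) = a * ln a - a * ln c"
  using assms by (cases "a = 0") (simp_all add: ln_div right_diff_distrib)

lemma mult_ln_div_mult:
  fixes q m Q :: real
  assumes "0 \<le> q" "q \<le> m" "q \<le> Q"
  shows "q * ln (q / (m * Q)) = q * ln q - q * ln m - q * ln Q"
proof (cases "q = 0")
  case False
  then have "q > 0" "m > 0" "Q > 0" using assms by auto
  then show ?thesis by (simp add: ln_div ln_mult algebra_simps)
qed simp

lemma mult_ln_div_le:
  fixes a c :: real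
  assumes "a \<ge> 0" "c > 0"
  shows "a * ln (a / c) \<le> a\<^sup>2 / c - a"
proof (cases "a = 0")
  case False
  then have "ln (a / c) \<le> a / c - 1"
    using assms by (intro ln_le_minus_one) simp
  then have "a * ln (a / c) \<le> a * (a / c - 1)"
    using assms by (intro mult_left_mono) auto
  then show ?thesis by (simp add: power2_eq_square right_diff_distrib)
qed simp

lemma binary_divergence_le_chi_square:
  fixes a b A B :: real
  assumes a: "a \<ge> 0" and b: "b \<ge> 0" and A: "A > 0" and B: "B > 0"
  shows "a * ln a + b * ln b - (a + b) * ln (a + b) - a * ln A - b * ln B + (a + b) * ln (A + B)
         \<le> (B * a - A * b)\<^sup>2 / (A * B * (a + b))"
proof (cases "a + b = 0")
  case True
  then have "a = 0" "b = 0" using a b by auto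
  then show ?thesis by simp
next
  case False
  then have s: "a + b > 0" using a b by simp
  define c d where "c = A * (a + b) / (A + B)" and "d = B * (a + b) / (A + B)"
  have c: "c > 0" and d: "d > 0" using s A B by (simp_all add: c_def d_def)
  have ln_c: "ln c = ln A + ln (a + b) - ln (A + B)"
    using s A B by (simp add: c_def ln_div ln_mult)
  have ln_d: "ln d = ln B + ln (a + b) - ln (A + B)"
    using s A B by (simp add: d_def ln_div ln_mult)
  have "a * ln a + b * ln b - (a + b) * ln (a + b) - a * ln A - b * ln B + (a + b) * ln (A + B)
      = a * ln (a / c) + b * ln (b / d)"
    by (simp add: mult_ln_div[OF a c] mult_ln_div[OF b d] ln_c ln_d algebra_simps)
  also have "\<dots> \<le> (a\<^sup>2 / c - a) + (b\<^sup>2 / d - b)"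
    using mult_ln_div_le[OF a c] mult_ln_div_le[OF b d] by linarith
  also have "\<dots> = (B * a - A * b)\<^sup>2 / (A * B * (a + b))"
    using s A B by (simp add: c_def d_def divide_simps power2_eq_square) (simp add: algebra_simps)
  finally show ?thesis .
qed

lemma chi_square_le_hellinger:
  fixes q r A B t :: real
  assumes q: "q \<ge> 0" and r: "r \<ge> 0" and A: "A > 0" and B: "B > 0" and "A \<le> t" "B \<le> t"
  shows "(B * q - A * r)\<^sup>2 / (A * B * (q + r)) \<le> 2 * t * (sqrt (q / A) - sqrt (r / B))\<^sup>2"
proof (cases "q + r = 0")
  case True
  then show ?thesis using assms by simp
next
  case False
  define x y where "x = sqrt (q / A)" and "y = sqrt (r / B)"
  have qx: "q = A * x\<^sup>2" and ry: "r = B * y\<^sup>2" using q r A B by (simp_all add: x_def y_def)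
  have "A * B * (x + y)\<^sup>2 \<le> A * B * (2 * (x\<^sup>2 + y\<^sup>2))"
    using A B zero_le_square[of "x - y"]
    by (intro mult_left_mono) (auto simp: power2_eq_square algebra_simps)
  also have "\<dots> = 2 * (B * q + A * r)" by (simp add: qx ry algebra_simps)
  also have "\<dots> \<le> 2 * (t * q + t * r)"
    using assms by (intro mult_left_mono add_mono mult_right_mono) auto
  finally have key: "A * B * (x + y)\<^sup>2 \<le> 2 * t * (q + r)" by (simp add: algebra_simps)
  have "(B * q - A * r)\<^sup>2 = A * B * (x - y)\<^sup>2 * (A * B * (x + y)\<^sup>2)"
    by (simp add: qx ry power2_eq_square algebra_simps)
  also have "\<dots> \<le> A * B * (x - y)\<^sup>2 * (2 * t * (q + r))"
    using key A B by (intro mult_left_mono) auto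
  finally have "(B * q - A * r)\<^sup>2 \<le> 2 * t * (x - y)\<^sup>2 * (A * B * (q + r))"
    by (simp add: algebra_simps)
  moreover have "A * B * (q + r) > 0" using A B q r False by simp
  ultimately show ?thesis unfolding x_def y_def by (simp add: pos_divide_le_eq)
qed

lemma chord_le_arc:
  fixes x y :: real
  shows "(cos x - cos y)\<^sup>2 + (sin x - sin y)\<^sup>2 \<le> (x - y)\<^sup>2"
proof -
  have "(cos x - cos y)\<^sup>2 + (sin x - sin y)\<^sup>2 = 2 - 2 * cos (x - y)"
    using sin_cos_squared_add[of x] sin_cos_squared_add[of y]
    by (simp add: cos_diff power2_eq_square algebra_simps)
  also have "cos (x - y) = cos (2 * ((x - y) / 2))" by (rule arg_cong[where f = cos]) simp
  also have "\<dots> = 1 - 2 * (sin ((x - y) / 2))\<^sup>2" by (rule cos_double_sin)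
  also have "(sin ((x - y) / 2))\<^sup>2 \<le> ((x - y) / 2)\<^sup>2"
    using abs_sin_x_le_abs_x[of "(x - y) / 2"] by (simp only: abs_le_square_iff)
  finally show ?thesis by (simp add: power_divide)
qed

section \<open>Weighted binary entropy and angles\<close>

definition xlnx :: "real \<Rightarrow> real" where
  "xlnx t = t * ln t"

(* (a + b) h(a / (a + b)) for the binary entropy h in nats *)
definition wbin_entropy :: "real \<Rightarrow> real \<Rightarrow> real" where
  "wbin_entropy a b = xlnx (a + b) - xlnx a - xlnx b"

definition bin_angle :: "real \<Rightarrow> real \<Rightarrow> real" where
  "bin_angle a b = arccos (sqrt (a / (a + b)))"

lemma bin_angle_bounds:
  fixes a b :: real
  assumes "a \<ge> 0" "b \<ge> 0"
  shows "0 \<le> bin_angle a b" "bin_angle a b \<le> pi / 2"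
proof -
  have "a / (a + b) \<le> 1" using assms by (cases "a + b = 0") (auto simp: divide_le_eq)
  then have s: "0 \<le> sqrt (a / (a + b))" "sqrt (a / (a + b)) \<le> 1" using assms by simp_all
  show "0 \<le> bin_angle a b"
    unfolding bin_angle_def using arccos_lbound[of "sqrt (a / (a + b))"] s by linarith
  show "bin_angle a b \<le> pi / 2"
    unfolding bin_angle_def using s by (rule arccos_le_pi2)
qed

lemma cos_sin_bin_angle:
  fixes a b :: real
  assumes "a \<ge> 0" "b \<ge> 0" "a + b > 0"
  shows "cos (bin_angle a b) = sqrt (a / (a + b))" "sin (bin_angle a b) = sqrt (b / (a + b))"
proof -
  have le1: "-1 \<le> sqrt (a / (a + b))" "sqrt (a / (a + b)) \<le> 1"
    using assms by (auto intro: order.trans[OF _ real_sqrt_ge_zero])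
  show "cos (bin_angle a b) = sqrt (a / (a + b))"
    unfolding bin_angle_def by (rule cos_arccos[OF le1])
  have "1 - a / (a + b) = b / (a + b)" using assms by (simp add: field_simps)
  then show "sin (bin_angle a b) = sqrt (b / (a + b))"
    unfolding bin_angle_def sin_arccos[OF le1] using assms by simp
qed

lemma wbin_entropy_merge_le_angle_gap:
  fixes a b c d t :: real
  assumes a: "a \<ge> 0" and b: "b \<ge> 0" and c: "c \<ge> 0" and d: "d \<ge> 0"
    and "a + b \<le> t" and "c + d \<le> t"
  shows "wbin_entropy (a + c) (b + d) - wbin_entropy a b - wbin_entropy c d
         \<le> 2 * t * (bin_angle a b - bin_angle c d)\<^sup>2"
proof (cases "a + b = 0 \<or> c + d = 0")
  case True
  then have "a = 0 \<and> b = 0 \<or> c = 0 \<and> d = 0" using assms by auto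
  moreover have "t \<ge> 0" using assms by linarith
  ultimately show ?thesis by (auto simp: wbin_entropy_def xlnx_def)
next
  case False
  define A B where "A = a + b" and "B = c + d"
  have A: "A > 0" and B: "B > 0" and "A \<le> t" "B \<le> t"
    using False assms by (auto simp: A_def B_def)
  have "wbin_entropy (a + c) (b + d) - wbin_entropy a b - wbin_entropy c d
     = (a * ln a + c * ln c - (a + c) * ln (a + c) - a * ln A - c * ln B + (a + c) * ln (A + B))
     + (b * ln b + d * ln d - (b + d) * ln (b + d) - b * ln A - d * ln B + (b + d) * ln (A + B))"
    by (simp add: wbin_entropy_def xlnx_def A_def B_def algebra_simps)
  also have "\<dots> \<le> 2 * t * ((sqrt (a / A) - sqrt (c / B))\<^sup>2 + (sqrt (b / A) - sqrt (d / B))\<^sup>2)"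
    using binary_divergence_le_chi_square[OF a c A B] binary_divergence_le_chi_square[OF b d A B]
      chi_square_le_hellinger[OF a c A B \<open>A \<le> t\<close> \<open>B \<le> t\<close>]
      chi_square_le_hellinger[OF b d A B \<open>A \<le> t\<close> \<open>B \<le> t\<close>]
    by (simp add: algebra_simps)
  also have "(sqrt (a / A) - sqrt (c / B))\<^sup>2 + (sqrt (b / A) - sqrt (d / B))\<^sup>2
      = (cos (bin_angle a b) - cos (bin_angle c d))\<^sup>2 + (sin (bin_angle a b) - sin (bin_angle c d))\<^sup>2"
    using A B by (simp add: cos_sin_bin_angle a b c d A_def B_def)
  also have "2 * t * \<dots> \<le> 2 * t * (bin_angle a b - bin_angle c d)\<^sup>2"
    using A \<open>A \<le> t\<close> by (intro mult_left_mono chord_le_arc) auto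
  finally show ?thesis .
qed

lemma pigeonhole_close_values:
  fixes S :: "'a set" and f :: "'a \<Rightarrow> real" and c :: real and m :: nat
  assumes "finite S" "card S > m" "m \<ge> 1" "c > 0" "\<forall>z\<in>S. 0 \<le> f z \<and> f z \<le> c"
  shows "\<exists>i\<in>S. \<exists>j\<in>S. i \<noteq> j \<and> \<bar>f i - f j\<bar> \<le> c / m"
proof -
  define w where "w = c / m"
  have w: "w > 0" and c: "c = m * w" using assms by (simp_all add: w_def)
  define bucket where "bucket z = min (nat \<lfloor>f z / w\<rfloor>) (m - 1)" for z
  have in_bucket: "bucket z * w \<le> f z \<and> f z \<le> (bucket z + 1) * w" if "z \<in> S" for z
  proof (cases "nat \<lfloor>f z / w\<rfloor> \<le> m - 1")
    case True
    have "0 \<le> f z / w" using assms that w by simp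
    then have "real (bucket z) = \<lfloor>f z / w\<rfloor>" using True by (simp add: bucket_def)
    moreover have "\<lfloor>f z / w\<rfloor> * w \<le> f z"
      using mult_right_mono[OF of_int_floor_le[of "f z / w"], of w] w by simp
    moreover have "f z < (\<lfloor>f z / w\<rfloor> + 1) * w"
      using mult_strict_right_mono[OF real_of_int_floor_add_one_gt[of "f z / w"] w] w by simp
    ultimately show ?thesis by (simp add: algebra_simps)
  next
    case False
    then have "real m \<le> f z / w" by linarith
    then have "f z = c" using assms that w c by (simp add: field_simps) (meson antisym)
    then show ?thesis using False assms w c by (simp add: bucket_def of_nat_diff algebra_simps)
  qed
  have "bucket ` S \<subseteq> {..<m}" using assms by (auto simp: bucket_def)
  then have "card (bucket ` S) < card S" using assms by (metis card_lessThan card_mono le_less_trans finite_lessThan)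
  then obtain i j where ij: "i \<in> S" "j \<in> S" "i \<noteq> j" "bucket i = bucket j"
    by (metis pigeonhole inj_on_def)
  have "\<bar>f i - f j\<bar> \<le> w"
    using in_bucket[OF ij(1)] in_bucket[OF ij(2)] ij(4) by (simp add: abs_le_iff algebra_simps)
  then show ?thesis using ij unfolding w_def by blast
qed

lemma card_above_mult_less:
  fixes W :: "'a \<Rightarrow> real" and t :: real
  assumes "finite S" "\<forall>z\<in>S. W z \<ge> 0" "sum W S \<le> 1"
  shows "card {z\<in>S. t < W z} * t < 1"
proof (cases "{z\<in>S. t < W z} = {}")
  case True
  then show ?thesis unfolding True by simp
next
  case False
  have "card {z\<in>S. t < W z} * t = (\<Sum>z\<in>{z\<in>S. t < W z}. t)" by simp
  also have "\<dots> < (\<Sum>z\<in>{z\<in>S. t < W z}. W z)"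
    using False assms by (intro sum_strict_mono) auto
  also have "\<dots> \<le> sum W S" using assms by (intro sum_mono2) auto
  finally show ?thesis using assms by linarith
qed

lemma card_light_gt_half:
  fixes W :: "'a \<Rightarrow> real"
  assumes "finite S" "S \<noteq> {}" "\<forall>z\<in>S. W z \<ge> 0" "sum W S \<le> 1"
  shows "card S div 2 < card {z\<in>S. W z \<le> 2 / card S}"
proof -
  have "card {z\<in>S. 2 / card S < W z} * (2 / card S) < 1"
    using assms by (intro card_above_mult_less)
  moreover have "real (card S) > 0" using assms by (simp add: card_gt_0_iff)
  ultimately have "real (2 * card {z\<in>S. 2 / card S < W z}) < card S"
    by (simp add: field_simps)
  then have "2 * card {z\<in>S. 2 / card S < W z} < card S"
    by (simp only: of_nat_less_iff)
  moreover have "{z\<in>S. W z \<le> 2 / card S} = S - {z\<in>S. 2 / card S < W z}" by auto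
  ultimately show ?thesis using assms by (simp add: card_Diff_subset)
qed

lemma angle_gap_cost_le:
  fixes M :: nat
  assumes "M \<ge> 2"
  shows "2 * (2 / M) * ((pi / 2) / (M div 2))\<^sup>2 \<le> 64 / (M * (real M - 1)\<^sup>2)"
proof -
  define m where "m = real (M div 2)"
  have m: "m > 0" "real M - 1 \<le> 2 * m" using assms unfolding m_def by linarith+
  have "2 * (2 / M) * ((pi / 2) / m)\<^sup>2 = pi\<^sup>2 / (M * m\<^sup>2)"
    by (simp add: power2_eq_square field_simps)
  also have "\<dots> \<le> 4\<^sup>2 / (M * m\<^sup>2)"
    using pi_less_4 m assms by (intro divide_right_mono power_mono) auto
  also have "\<dots> = 64 / (M * (2 * m)\<^sup>2)" by (simp add: power2_eq_square)
  also have "\<dots> \<le> 64 / (M * (real M - 1)\<^sup>2)"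
    using m assms by (intro divide_left_mono mult_left_mono power_mono mult_pos_pos) auto
  finally show ?thesis unfolding m_def .
qed

lemma telescoping_step_le:
  fixes M :: nat
  assumes "M \<ge> 2"
  shows "64 / (M * (real M - 1)\<^sup>2) \<le> 64 / (real M - 1)\<^sup>2 - 64 / (real M)\<^sup>2"
proof -
  have "real M \<ge> 2" using assms by simp
  then have "64 / (real M - 1)\<^sup>2 - 64 / (real M)\<^sup>2 - 64 / (M * (real M - 1)\<^sup>2)
      = 64 * (real M - 1) / ((real M)\<^sup>2 * (real M - 1)\<^sup>2)"
    by (simp add: divide_simps) (simp add: algebra_simps power2_eq_square)
  moreover have "64 * (real M - 1) / ((real M)\<^sup>2 * (real M - 1)\<^sup>2) \<ge> 0" using assms by simp
  ultimately show ?thesis by linarith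
qed

section \<open>Mutual information of a quantizer\<close>

lemma qjoint_nonneg: "is_joint_pmf p \<Longrightarrow> qjoint p g x z \<ge> 0"
  unfolding qjoint_def is_joint_pmf_def by (simp add: sum_nonneg)

lemma sum_qjoint: "(\<Sum>z\<in>range g. qjoint p g x z) = marg_X p x"
  unfolding qjoint_def marg_X_def using sum.image_gen[of UNIV "p x" g] by simp

lemma mutual_info_eq_entropy_diff:
  assumes p: "is_joint_pmf p"
  shows "mutual_info p g = - (\<Sum>x\<in>UNIV. xlnx (marg_X p x))
     - (\<Sum>z\<in>range g. wbin_entropy (qjoint p g True z) (qjoint p g False z))"
proof -
  have "qjoint p g x z \<le> marg_X p x" for x z
    using p unfolding qjoint_def marg_X_def is_joint_pmf_def by (intro sum_mono2) auto
  moreover have "qjoint p g x z \<le> (\<Sum>x'\<in>UNIV. qjoint p g x' z)" for x z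
    using qjoint_nonneg[OF p] by (cases x) (auto simp: UNIV_bool)
  ultimately have summand: "qjoint p g x z * ln (qjoint p g x z / (marg_X p x * (\<Sum>x'\<in>UNIV. qjoint p g x' z)))
     = xlnx (qjoint p g x z) - qjoint p g x z * ln (marg_X p x)
       - qjoint p g x z * ln (\<Sum>x'\<in>UNIV. qjoint p g x' z)" for x z
    using qjoint_nonneg[OF p] unfolding xlnx_def by (intro mult_ln_div_mult)
  show ?thesis
    unfolding mutual_info_def summand
    by (simp add: UNIV_bool sum_subtractf sum.distrib sum_distrib_left[symmetric] sum_qjoint
        wbin_entropy_def xlnx_def algebra_simps)
qed

lemma mutual_info_comp_inj:
  assumes "inj_on s (range g)"
  shows "mutual_info p (s \<circ> g) = mutual_info p g"
proof -
  have "qjoint p (s \<circ> g) x (s z) = qjoint p g x z" if "z \<in> range g" for x z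
  proof -
    have "{y. s (g y) = s z} = {y. g y = z}" using assms that by (auto dest: inj_onD)
    then show ?thesis unfolding qjoint_def by simp
  qed
  then show ?thesis
    unfolding mutual_info_def image_comp[symmetric] by (simp add: sum.reindex[OF assms])
qed

section \<open>Greedy merging\<close>

(* Invariant of the greedy algorithm: g y is the block of a partition of Y containing y. *)
definition is_block_map :: "('y \<Rightarrow> 'y set) \<Rightarrow> bool" where
  "is_block_map g \<longleftrightarrow> (\<forall>y. y \<in> g y) \<and> (\<forall>y y'. y \<in> g y' \<longrightarrow> g y' = g y)"

lemma is_block_map_singleton: "is_block_map (\<lambda>y. {y})"
  unfolding is_block_map_def by auto

lemma is_block_map_eq:
  assumes "is_block_map g" "y \<in> g y'"
  shows "g y = g y'"
  using assms(1)[unfolded is_block_map_def, THEN conjunct2, rule_format, OF assms(2)] by (rule sym)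

lemma is_block_map_merge:
  assumes g: "is_block_map g" and "i \<in> range g" "j \<in> range g"
  shows "is_block_map (merge g i j)"
  unfolding is_block_map_def
proof (intro conjI allI impI)
  fix y
  show "y \<in> merge g i j y" using g by (auto simp: is_block_map_def merge_def)
next
  fix y y'
  assume y: "y \<in> merge g i j y'"
  show "merge g i j y' = merge g i j y"
  proof (cases "g y' = i \<or> g y' = j")
    case True
    obtain a b where "i = g a" "j = g b" using assms by blast
    moreover have "y \<in> i \<union> j" using y True by (simp add: merge_def)
    ultimately have "g y = i \<or> g y = j" using is_block_map_eq[OF g, of y a] is_block_map_eq[OF g, of y b] by auto
    then show ?thesis using True by (simp add: merge_def)
  next
    case False
    then have "g y = g y'" using y is_block_map_eq[OF g, of y y'] by (simp add: merge_def)
    then show ?thesis by (simp add: merge_def)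
  qed
qed

lemma union_notin_range_diff:
  assumes g: "is_block_map g" and "i \<in> range g" "j \<in> range g"
  shows "i \<union> j \<notin> range g - {i, j}"
proof
  assume "i \<union> j \<in> range g - {i, j}"
  then obtain y where y: "g y = i \<union> j" "i \<union> j \<noteq> i" by auto
  obtain a where a: "i = g a" using assms by blast
  have "a \<in> g a" using g by (simp add: is_block_map_def)
  then have "g a = g y" using a y by (intro is_block_map_eq[OF g]) blast
  then show False using a y by simp
qed

lemma range_merge:
  assumes "i \<in> range g" "j \<in> range g"
  shows "range (merge g i j) = insert (i \<union> j) (range g - {i, j})"
  using assms unfolding merge_def by (auto simp: image_iff)

lemma card_range_merge:
  fixes g :: "'y::finite \<Rightarrow> 'y set"
  assumes "is_block_map g" "i \<in> range g" "j \<in> range g" "i \<noteq> j"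
  shows "card (range (merge g i j)) = card (range g) - 1"
proof -
  have "card {i, j} \<le> card (range g)" using assms by (intro card_mono) auto
  moreover have "card (range g - {i, j}) = card (range g) - 2"
    using assms by (subst card_Diff_subset) auto
  ultimately show ?thesis
    unfolding range_merge[OF assms(2,3)] using union_notin_range_diff[OF assms(1-3)] assms(4) by simp
qed

lemma qjoint_merge_union:
  assumes "is_block_map g" "i \<in> range g" "j \<in> range g" "i \<noteq> j"
  shows "qjoint p (merge g i j) x (i \<union> j) = qjoint p g x i + qjoint p g x j"
proof -
  have "{y. merge g i j y = i \<union> j} = {y. g y = i} \<union> {y. g y = j}"
    using union_notin_range_diff[OF assms(1-3)] unfolding merge_def by auto
  then show ?thesis
    unfolding qjoint_def using assms(4) by (simp add: sum.union_disjoint disjoint_iff)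
qed

lemma qjoint_merge_other:
  assumes "is_block_map g" "i \<in> range g" "j \<in> range g" "k \<in> range g - {i, j}"
  shows "qjoint p (merge g i j) x k = qjoint p g x k"
proof -
  have "k \<noteq> i" "k \<noteq> j" "k \<noteq> i \<union> j"
    using union_notin_range_diff[OF assms(1-3)] assms(4) by auto
  then have "{y. merge g i j y = k} = {y. g y = k}" unfolding merge_def by auto
  then show ?thesis unfolding qjoint_def by simp
qed

definition merge_cost :: "(bool \<Rightarrow> 'y::finite \<Rightarrow> real) \<Rightarrow> ('y \<Rightarrow> 'z) \<Rightarrow> 'z \<Rightarrow> 'z \<Rightarrow> real" where
  "merge_cost p g i j =
     wbin_entropy (qjoint p g True i + qjoint p g True j) (qjoint p g False i + qjoint p g False j)
     - wbin_entropy (qjoint p g True i) (qjoint p g False i)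
     - wbin_entropy (qjoint p g True j) (qjoint p g False j)"

lemma mutual_info_merge:
  fixes g :: "'y::finite \<Rightarrow> 'y set"
  assumes p: "is_joint_pmf p" and g: "is_block_map g" "i \<in> range g" "j \<in> range g" "i \<noteq> j"
  shows "mutual_info p g - mutual_info p (merge g i j) = merge_cost p g i j"
proof -
  define E where "E (f :: 'y \<Rightarrow> 'y set) z = wbin_entropy (qjoint p f True z) (qjoint p f False z)"
    for f z
  have "sum (E g) (range g) = E g i + E g j + sum (E g) (range g - {i, j})"
    using g by (simp add: sum.remove[of _ i] sum.remove[of _ j] Diff_insert2[symmetric])
  moreover have "sum (E (merge g i j)) (range (merge g i j))
      = E (merge g i j) (i \<union> j) + sum (E g) (range g - {i, j})"
    using union_notin_range_diff[OF g(1-3)]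
    by (simp add: range_merge[OF g(2,3)] E_def qjoint_merge_other[OF g(1-3)])
  ultimately show ?thesis
    unfolding mutual_info_eq_entropy_diff[OF p] E_def[symmetric]
    by (simp add: E_def merge_cost_def qjoint_merge_union[OF g])
qed

lemma exists_cheap_merge:
  fixes p :: "bool \<Rightarrow> 'y::finite \<Rightarrow> real" and g :: "'y \<Rightarrow> 'z"
  assumes p: "is_joint_pmf p" and M: "card (range g) = M" "M \<ge> 2"
  shows "\<exists>i\<in>range g. \<exists>j\<in>range g. i \<noteq> j \<and> merge_cost p g i j \<le> 64 / (M * (real M - 1)\<^sup>2)"
proof -
  define a b where "a z = qjoint p g True z" and "b z = qjoint p g False z" for z
  define t where "t = 2 / real M"
  define m where "m = M div 2"
  define light where "light = {z\<in>range g. a z + b z \<le> t}"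
  define \<theta> where "\<theta> z = bin_angle (a z) (b z)" for z
  have ab: "a z \<ge> 0" "b z \<ge> 0" for z
    unfolding a_def b_def by (simp_all add: qjoint_nonneg[OF p])
  have "(\<Sum>z\<in>range g. a z + b z) = 1"
    using p unfolding is_joint_pmf_def marg_X_def a_def b_def
    by (simp add: sum.distrib sum_qjoint[unfolded marg_X_def] UNIV_bool)
  then have "card light > m"
    unfolding light_def m_def t_def M(1)[symmetric] using ab
    by (intro card_light_gt_half) (auto intro: add_nonneg_nonneg)
  moreover have "\<forall>z\<in>light. 0 \<le> \<theta> z \<and> \<theta> z \<le> pi / 2"
    unfolding \<theta>_def using bin_angle_bounds[OF ab] by simp
  moreover have "finite light" "m \<ge> 1" using M by (simp_all add: light_def m_def)
  ultimately obtain i j where ij: "i \<in> light" "j \<in> light" "i \<noteq> j"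
    and close: "\<bar>\<theta> i - \<theta> j\<bar> \<le> (pi / 2) / m"
    using pigeonhole_close_values[of light m "pi / 2" \<theta>] by auto
  have "merge_cost p g i j \<le> 2 * t * (\<theta> i - \<theta> j)\<^sup>2"
    unfolding merge_cost_def a_def[symmetric] b_def[symmetric] \<theta>_def
    using ij(1,2) unfolding light_def by (intro wbin_entropy_merge_le_angle_gap ab) auto
  also have "\<dots> \<le> 2 * t * ((pi / 2) / m)\<^sup>2"
    using close by (intro mult_left_mono) (auto simp: t_def abs_le_square_iff[symmetric])
  also have "\<dots> \<le> 64 / (M * (real M - 1)\<^sup>2)"
    using angle_gap_cost_le[OF M(2)] by (simp add: t_def m_def)
  finally show ?thesis using ij unfolding light_def by blast
qed

lemma greedy_step_exists:
  assumes "card (range g) \<ge> 2"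
  shows "\<exists>g'. greedy_step p g g'"
proof -
  define P where "P = {(i, j). i \<in> range g \<and> j \<in> range g \<and> i \<noteq> j}"
  define loss where "loss = (\<lambda>(i, j). mutual_info p g - mutual_info p (merge g i j))"
  obtain i where i: "i \<in> range g" by blast
  have "\<not> range g \<subseteq> {i}" using assms card_mono[of "{i}" "range g"] by auto
  then obtain j where "j \<in> range g" "j \<noteq> i" by blast
  with i have "P \<noteq> {}" unfolding P_def by auto
  moreover have "finite P" unfolding P_def by (rule finite_subset[of _ "range g \<times> range g"]) auto
  ultimately obtain ij where "ij \<in> P" "\<forall>ij'\<in>P. loss ij \<le> loss ij'"
    using ex_is_arg_min_if_finite[of P loss] unfolding is_arg_min_def by (metis not_less)
  moreover obtain i j where "ij = (i, j)" by (cases ij)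
  ultimately have "greedy_step p g (merge g i j)"
    unfolding greedy_step_def by (intro exI[of _ i] exI[of _ j]) (auto simp: P_def loss_def)
  then show ?thesis by blast
qed

lemma greedy_run_exists:
  assumes "is_block_map g" "L \<ge> 1"
  shows "\<exists>h. greedy_run p L g h"
  using assms(1)
proof (induction "card (range g)" arbitrary: g rule: less_induct)
  case less
  show ?case
  proof (cases "card (range g) \<le> L")
    case True
    then show ?thesis using greedy_run.stop by blast
  next
    case False
    then have "card (range g) \<ge> 2" using assms(2) by linarith
    then obtain g' where step: "greedy_step p g g'" using greedy_step_exists by blast
    then obtain i j where "i \<in> range g" "j \<in> range g" "i \<noteq> j" "g' = merge g i j"
      unfolding greedy_step_def by blast
    then have "is_block_map g'" "card (range g') < card (range g)"
      using less.prems \<open>card (range g) \<ge> 2\<close> by (simp_all add: is_block_map_merge card_range_merge)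
    then obtain h where "greedy_run p L g' h" using less.hyps by blast
    moreover have "L < card (range g)" using False by simp
    ultimately show ?thesis using greedy_run.step step by blast
  qed
qed

lemma greedy_run_card_le: "greedy_run p L g h \<Longrightarrow> card (range h) \<le> L"
  by (induction rule: greedy_run.induct) auto

lemma greedy_run_loss_le:
  fixes p :: "bool \<Rightarrow> 'y::finite \<Rightarrow> real"
  assumes "greedy_run p L g h" "is_joint_pmf p" "is_block_map g" "L \<ge> 1"
  shows "mutual_info p g - mutual_info p h
         \<le> 64 / (real L)\<^sup>2 - 64 / (real (max L (card (range g))))\<^sup>2"
  using assms
proof (induction rule: greedy_run.induct)
  case (stop g)
  then show ?case by (simp add: max_absorb1)
next
  case (step g g' h)
  define M where "M = card (range g)"
  have M: "M \<ge> 2" "max L M = M" using step M_def by auto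
  obtain i j where ij: "i \<in> range g" "j \<in> range g" "i \<noteq> j" "g' = merge g i j"
    and greedy: "\<And>i' j'. i' \<in> range g \<Longrightarrow> j' \<in> range g \<Longrightarrow> i' \<noteq> j' \<Longrightarrow>
           mutual_info p g - mutual_info p g' \<le> mutual_info p g - mutual_info p (merge g i' j')"
    using step(2) unfolding greedy_step_def by blast
  obtain i' j' where ij': "i' \<in> range g" "j' \<in> range g" "i' \<noteq> j'"
    and cheap: "merge_cost p g i' j' \<le> 64 / (M * (real M - 1)\<^sup>2)"
    using exists_cheap_merge[OF step(5) M_def[symmetric] M(1)] by blast
  have "mutual_info p g - mutual_info p g' \<le> mutual_info p g - mutual_info p (merge g i' j')"
    using greedy[OF ij'] .
  also have "\<dots> = merge_cost p g i' j'" using mutual_info_merge[OF step(5,6) ij'] .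
  also have "\<dots> \<le> 64 / (real M - 1)\<^sup>2 - 64 / (real M)\<^sup>2"
    using cheap telescoping_step_le[OF M(1)] by linarith
  finally have first: "mutual_info p g - mutual_info p g' \<le> 64 / (real M - 1)\<^sup>2 - 64 / (real M)\<^sup>2" .
  have "card (range g') = M - 1" "is_block_map g'"
    using ij step(6) by (simp_all add: M_def card_range_merge is_block_map_merge)
  moreover have "real (M - 1) = real M - 1" using M(1) by (simp add: of_nat_diff)
  ultimately have "mutual_info p g' - mutual_info p h \<le> 64 / (real L)\<^sup>2 - 64 / (real M - 1)\<^sup>2"
    using step.IH[OF step(5) _ step(7)] step(1) by (simp add: M_def max_absorb2)
  moreover have "max L (card (range g)) = M" using M(2) by (simp add: M_def)
  ultimately show ?case using first by simp
qed

theorem theorem6: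
  fixes p :: "bool \<Rightarrow> 'y::finite \<Rightarrow> real" and L :: nat
  assumes "is_joint_pmf p" and "L \<ge> 1"
  shows "(\<exists>h. greedy_run p L (\<lambda>y. {y}) h) \<and>
         (\<forall>h. greedy_run p L (\<lambda>y. {y}) h \<longrightarrow>
            (\<exists>\<sigma> :: 'y set \<Rightarrow> nat. inj_on \<sigma> (range h) \<and> \<sigma> ` range h \<subseteq> {1..L} \<and>
               mutual_info p (\<lambda>y. y) - mutual_info p (\<sigma> \<circ> h) \<le> 64 / (real L)^2))"
proof (intro conjI allI impI)
  show "\<exists>h. greedy_run p L (\<lambda>y. {y}) h"
    using greedy_run_exists[OF is_block_map_singleton assms(2)] .
next
  fix h assume run: "greedy_run p L (\<lambda>y. {y}) h"
  obtain \<sigma> :: "'y set \<Rightarrow> nat" where \<sigma>: "bij_betw \<sigma> (range h) {1..card (range h)}"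
    using finite_same_card_bij[of "range h" "{1..card (range h)}"] by auto
  then have inj: "inj_on \<sigma> (range h)" and "\<sigma> ` range h \<subseteq> {1..L}"
    using greedy_run_card_le[OF run] by (auto simp: bij_betw_def)
  moreover have "mutual_info p (\<lambda>y. y) = mutual_info p (\<lambda>y. {y})"
    using mutual_info_comp_inj[of "\<lambda>y. {y}" "\<lambda>y. y" p] by (simp add: comp_def)
  moreover have "mutual_info p (\<lambda>y. {y}) - mutual_info p h \<le> 64 / (real L)\<^sup>2"
    using greedy_run_loss_le[OF run assms(1) is_block_map_singleton assms(2)]
    by (rule order.trans) simp
  ultimately show "\<exists>\<sigma> :: 'y set \<Rightarrow> nat. inj_on \<sigma> (range h) \<and> \<sigma> ` range h \<subseteq> {1..L} \<and>
      mutual_info p (\<lambda>y. y) - mutual_info p (\<sigma> \<circ> h) \<le> 64 / (real L)^2"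
    using mutual_info_comp_inj[OF inj] by auto
qed

end
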